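(* Consider the system $\dot{\boldsymbol{x}}(t)=-L(t)\boldsymbol{x}(t)$, $\boldsymbol{x}(t)\in\mathbb{R}^{dn}$, on a matrix-weighted switching network $\mathcal{G}(t)$ satisfying Assumption 2 (described in the context), with switching set $\{\mathcal{G}_1,\dots,\mathcal{G}_M\}$ and $L(\mathcal{G}_i)$ the matrix-valued Laplacian of $\mathcal{G}_i$. If $\lim_{t\to\infty}\boldsymbol{x}(t)=\boldsymbol{x}^*$, then $$\boldsymbol{x}^*\in\bigcap_{i=1}^{M}\mathrm{null}(L(\mathcal{G}_i)).$$ Moreover, $$\boldsymbol{x}^*=\sum_{i=1}^{r}(\boldsymbol{\eta}_i^\top\boldsymbol{x}(t_0))\boldsymbol{\eta}_i,$$ where $\boldsymbol{\eta}_1,\dots,\boldsymbol{\eta}_r\in\mathbb{R}^{dn}$ is an orthonormal basis of $\bigcap_{i=1}^{M}\mathrm{null}(L(\mathcal{G}_i))$ (i.e. $\mathrm{span}\{\boldsymbol{\eta}_1,\dots,\boldsymbol{\eta}_r\}$ equals this intersection and $\boldsymbol{\eta}_i^\top\boldsymbol{\eta}_j=1$ if $i=j$, $0$ otherwise).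
   Context: A matrix-weighted switching network $\mathcal{G}(t)=(\mathcal{V},\mathcal{E}(t),A(t))$ has node set $\mathcal{V}=\{1,\dots,n\}$, $n>1$; each edge $(i,j)\in\mathcal{E}(t)$ carries a symmetric weight $A_{ij}(t)\in\mathbb{R}^{d\times d}$ which is either positive (semi-)definite or negative (semi-)definite, with $A_{ij}=A_{ji}$, $A_{ii}=0$, and $A_{ij}(t)=0$ if $(i,j)\notin\mathcal{E}(t)$. Set $|A_{ij}|=A_{ij}$ if $A_{ij}\succeq0$ and $-A_{ij}$ if $A_{ij}\preceq0$. With $A=[A_{ij}]\in\mathbb{R}^{dn\times dn}$ and $D=\mathrm{diag}(D_1,\dots,D_n)$, $D_i=\sum_{j:(i,j)\in\mathcal{E}}|A_{ij}|$, the matrix-valued Laplacian is $L=D-A$; the system $\dot{\boldsymbol{x}}=-L(t)\boldsymbol{x}$ is the stacked form of $\dot{\boldsymbol{x}}_i=-\sum_{j}|A_{ij}|(\boldsymbol{x}_i-\mathrm{sgn}(A_{ij})\boldsymbol{x}_j)$, where $\mathrm{sgn}(A)$ is $1$, $-1$, $0$ for nonzero PSD, nonzero NSD, zero $A$ respectively. The initial time is $t_0=0$. Assumption 1: there is a sequence $\{t_k\}_{k\in\mathbb{N}}$ with $t_0=0$, $t_k\to\infty$, $t_{k+1}-t_k\ge\alpha>0$, and $\mathcal{G}(t)$ is constant on each $[t_k,t_{k+1})$. Assumption 2: Assumption 1 holds, and $\mathcal{G}(t)$ is always chosen from a finite set $\{\mathcal{G}_1,\dots,\mathcal{G}_M\}$,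 each $\mathcal{G}_i$ appearing infinitely many times in the sequence. *)

theory Defs
  imports "HOL-Analysis.Analysis"
begin

text \<open>Nodes are indexed by a finite type 'n, the agent-state dimension d by a finite
type 'd.  A stacked state x in R^(dn) is a vector indexed by 'n \<times> 'd, component (i,a)
being the a-th coordinate of agent i.\<close>

definition psd :: "real^'d^'d \<Rightarrow> bool" where
  "psd A \<longleftrightarrow> (\<forall>v. 0 \<le> v \<bullet> (A *v v))"

definition nsd :: "real^'d^'d \<Rightarrow> bool" where
  "nsd A \<longleftrightarrow> (\<forall>v. v \<bullet> (A *v v) \<le> 0)"

definition mabs :: "real^'d^'d \<Rightarrow> real^'d^'d" where
  "mabs A = (if psd A then A else - A)"

text \<open>A matrix-weighted graph on node type 'n, given by its weight function W i j = A_ij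
(zero iff (i,j) is not an edge).\<close>
definition mw_graph :: "('n::finite \<Rightarrow> 'n \<Rightarrow> real^'d^'d) \<Rightarrow> bool" where
  "mw_graph W \<longleftrightarrow>
     (\<forall>i j. transpose (W i j) = W i j) \<and>
     (\<forall>i j. W i j = W j i) \<and>
     (\<forall>i. W i i = 0) \<and>
     (\<forall>i j. psd (W i j) \<or> nsd (W i j))"

text \<open>Matrix-valued Laplacian L = D - A, D = diag(D_1,...,D_n), D_i = sum_j |A_ij|.\<close>
definition deg_block :: "('n::finite \<Rightarrow> 'n \<Rightarrow> real^'d^'d) \<Rightarrow> 'n \<Rightarrow> real^'d^'d" where
  "deg_block W i = (\<Sum>j\<in>UNIV. mabs (W i j))"

definition laplacian ::
  "('n::finite \<Rightarrow> 'n \<Rightarrow> real^'d::finite^'d) \<Rightarrow> real^('n \<times> 'd)^('n \<times> 'd)" where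
  "laplacian W = (\<chi> p q. (if fst p = fst q then deg_block W (fst p) $ snd p $ snd q else 0) - W (fst p) (fst q) $ snd p $ snd q)"

definition null_space :: "real^'m^'k \<Rightarrow> (real^'m) set" where
  "null_space L = {v. L *v v = 0}"

end

theory Submission
  imports Defs
begin

text \<open>Each Laplacian is symmetric. If \<open>v = L\<^sub>i x\<^sup>* \<noteq> 0\<close>, then on every late interval of
length \<open>\<alpha>\<close> during which mode \<open>i\<close> is active, \<open>v \<bullet> x\<close> decreases by more than \<open>\<alpha> |v|\<^sup>2 / 2\<close>; since
such intervals occur arbitrarily late, \<open>v \<bullet> x\<close> cannot converge. Conversely, a vector \<open>e\<close>
in the common null space is, by symmetry, orthogonal to the range of every \<open>L\<^sub>i\<close>, so
\<open>e \<bullet> x(t)\<close> is conserved. Hence \<open>x\<^sup>*\<close>, which lies in the common null space, has the same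
orthogonal projection onto it as \<open>x(t\<^sub>0)\<close>.\<close>

lemma laplacian_symmetric:
  assumes "mw_graph W"
  shows "transpose (laplacian W) = laplacian W"
proof -
  have W_sym: "W i j $ a $ b = W i j $ b $ a" for i j a b
  proof -
    have "transpose (W i j) = W i j" using assms unfolding mw_graph_def by auto
    then show ?thesis by (metis transpose_def vec_lambda_beta)
  qed
  have W_swap: "W i j = W j i" for i j
    using assms unfolding mw_graph_def by auto
  have mabs_sym: "mabs (W i j) $ a $ b = mabs (W i j) $ b $ a" for i j a b
    by (simp add: mabs_def W_sym)
  have deg_sym: "deg_block W i $ a $ b = deg_block W i $ b $ a" for i a b
    unfolding deg_block_def by (simp add: mabs_sym)
  show ?thesis
    unfolding laplacian_def transpose_def by (simp add: vec_eq_iff deg_sym W_sym W_swap)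
qed

lemma inner_symmetric_matrix_null:
  fixes L :: "real^'n^'n"
  assumes "transpose L = L" and "L *v e = 0"
  shows "e \<bullet> (L *v y) = 0"
proof -
  have "e \<bullet> (L *v y) = (transpose L *v e) \<bullet> y"
    by (simp flip: dot_lmul_matrix)
  then show ?thesis using assms by simp
qed

lemma orthonormal_span_expansion:
  fixes eta :: "nat \<Rightarrow> 'a::real_inner"
  assumes orth: "\<forall>i<r. \<forall>j<r. eta i \<bullet> eta j = (if i = j then 1 else 0)"
    and y: "y \<in> span (eta ` {..<r})"
  shows "y = (\<Sum>i<r. (eta i \<bullet> y) *\<^sub>R eta i)"
proof -
  have "inj_on eta {..<r}"
  proof (rule inj_onI)
    fix a b assume "a \<in> {..<r}" "b \<in> {..<r}" "eta a = eta b"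
    then have "eta a \<bullet> eta b = 1" using orth by auto
    then show "a = b" using orth \<open>a \<in> {..<r}\<close> \<open>b \<in> {..<r}\<close> by (auto split: if_splits)
  qed
  moreover obtain u where "y = (\<Sum>v\<in>eta ` {..<r}. u v *\<^sub>R v)"
    using y span_finite[of "eta ` {..<r}"] by auto
  ultimately have y_sum: "y = (\<Sum>i<r. u (eta i) *\<^sub>R eta i)"
    by (simp add: sum.reindex)
  have coeff: "eta j \<bullet> y = u (eta j)" if "j < r" for j
  proof -
    have "eta j \<bullet> y = (\<Sum>i<r. u (eta i) * (eta j \<bullet> eta i))"
      by (simp add: y_sum inner_sum_right)
    also have "\<dots> = (\<Sum>i<r. if i = j then u (eta i) else 0)"
      by (rule sum.cong) (use orth that in auto)
    finally show ?thesis using that by simp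
  qed
  show ?thesis
    by (subst y_sum) (simp add: coeff)
qed

lemma orthonormal_span_projection_unique:
  fixes eta :: "nat \<Rightarrow> 'a::real_inner"
  assumes orth: "\<forall>i<r. \<forall>j<r. eta i \<bullet> eta j = (if i = j then 1 else 0)"
    and "y \<in> span (eta ` {..<r})"
    and same_coeffs: "\<And>i. i < r \<Longrightarrow> eta i \<bullet> y = eta i \<bullet> z"
  shows "y = (\<Sum>i<r. (eta i \<bullet> z) *\<^sub>R eta i)"
proof -
  have "y = (\<Sum>i<r. (eta i \<bullet> y) *\<^sub>R eta i)"
    using orthonormal_span_expansion[OF assms(1,2)] .
  also have "\<dots> = (\<Sum>i<r. (eta i \<bullet> z) *\<^sub>R eta i)"
    by (rule sum.cong) (simp_all add: same_coeffs)
  finally show ?thesis .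
qed

lemma has_real_derivative_inner_right:
  assumes "(x has_vector_derivative D) F"
  shows "((\<lambda>t. w \<bullet> x t) has_real_derivative w \<bullet> D) F"
  using bounded_linear.has_vector_derivative[OF bounded_linear_inner_right assms]
  by (simp add: has_real_derivative_iff_has_vector_derivative)

lemma recurrent_flow_limit_in_kernel:
  fixes x :: "real \<Rightarrow> 'a::real_inner" and f :: "'a \<Rightarrow> 'a"
  assumes f: "bounded_linear f"
    and lim: "(x \<longlongrightarrow> l) at_top"
    and alpha: "alpha > 0"
    and recur: "\<And>T. \<exists>a\<ge>T. continuous_on {a..a + alpha} x \<and>
                  (\<forall>s\<in>{a<..<a + alpha}. (x has_vector_derivative - f (x s)) (at s))"
  shows "f l = 0"
proof (rule ccontr)
  define v where "v = f l"
  define c where "c = v \<bullet> v"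
  assume "f l \<noteq> 0"
  then have c_pos: "c > 0" by (simp add: c_def v_def)
  have "((\<lambda>t. v \<bullet> f (x t)) \<longlongrightarrow> c) at_top"
    unfolding c_def v_def by (intro tendsto_intros bounded_linear.tendsto[OF f] lim)
  then have "\<forall>\<^sub>F t in at_top. v \<bullet> f (x t) > c / 2"
    using c_pos by (intro order_tendstoD) auto
  moreover have "\<forall>\<^sub>F t in at_top. dist (v \<bullet> x t) (v \<bullet> l) < alpha * c / 8"
    using c_pos alpha by (intro tendstoD tendsto_intros lim) auto
  ultimately have "\<forall>\<^sub>F t in at_top. v \<bullet> f (x t) > c / 2 \<and> dist (v \<bullet> x t) (v \<bullet> l) < alpha * c / 8"
    by (rule eventually_conj)
  then obtain T where T: "\<And>t. t \<ge> T \<Longrightarrow>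
      v \<bullet> f (x t) > c / 2 \<and> dist (v \<bullet> x t) (v \<bullet> l) < alpha * c / 8"
    unfolding eventually_at_top_linorder by blast
  obtain a where "a \<ge> T" and cont: "continuous_on {a..a + alpha} x"
    and der: "\<And>s. s \<in> {a<..<a + alpha} \<Longrightarrow> (x has_vector_derivative - f (x s)) (at s)"
    using recur by blast
  obtain z where z: "a < z" "z < a + alpha"
    and mvt_eq: "v \<bullet> x (a + alpha) - v \<bullet> x a = - (v \<bullet> f (x z)) * (a + alpha - a)"
  proof (rule mvt[where f = "\<lambda>t. v \<bullet> x t" and f' = "\<lambda>s. (*) (- (v \<bullet> f (x s)))"])
    show "continuous_on {a..a + alpha} (\<lambda>t. v \<bullet> x t)"
      by (intro continuous_intros cont)
    show "((\<lambda>t. v \<bullet> x t) has_derivative (*) (- (v \<bullet> f (x s)))) (at s)"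
      if "a < s" "s < a + alpha" for s
      using has_real_derivative_inner_right[OF der, of s v] that
      by (simp add: has_field_derivative_def)
  qed (use alpha that in auto)
  have "v \<bullet> x (a + alpha) - v \<bullet> x a = - (v \<bullet> f (x z) * alpha)"
    using mvt_eq by simp
  moreover have "v \<bullet> f (x z) > c / 2" using T z \<open>a \<ge> T\<close> by auto
  then have "v \<bullet> f (x z) * alpha > c / 2 * alpha"
    using alpha by (rule mult_strict_right_mono)
  moreover have "c / 2 * alpha = 4 * (alpha * c / 8)" by (simp add: field_simps)
  moreover have "dist (v \<bullet> x a) (v \<bullet> l) < alpha * c / 8"
    and "dist (v \<bullet> x (a + alpha)) (v \<bullet> l) < alpha * c / 8"
    using T \<open>a \<ge> T\<close> alpha by auto
  ultimately show False
    unfolding dist_real_def by linarith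
qed

lemma inner_conserved_if_orthogonal_derivative:
  fixes x :: "real \<Rightarrow> 'a::real_inner"
  assumes cont: "continuous_on {0..} x"
    and fin: "\<And>T. finite (S \<inter> {..T})"
    and der: "\<And>s. s > 0 \<Longrightarrow> s \<notin> S \<Longrightarrow> (x has_vector_derivative x' s) (at s)"
    and orth: "\<And>s. s > 0 \<Longrightarrow> s \<notin> S \<Longrightarrow> e \<bullet> x' s = 0"
    and "t \<ge> 0"
  shows "e \<bullet> x t = e \<bullet> x 0"
proof (rule has_derivative_zero_unique_strong_interval[where f = "\<lambda>t. e \<bullet> x t"])
  show "finite (insert 0 (S \<inter> {..t}))" using fin by simp
  show "continuous_on {0..t} (\<lambda>t. e \<bullet> x t)"
    by (intro continuous_intros continuous_on_subset[OF cont]) auto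
  show "((\<lambda>t. e \<bullet> x t) has_derivative (\<lambda>h. 0)) (at s within {0..t})"
    if "s \<in> {0..t} - insert 0 (S \<inter> {..t})" for s
  proof -
    have "s > 0" "s \<notin> S" using that by auto
    then have "((\<lambda>t. e \<bullet> x t) has_real_derivative 0) (at s)"
      using has_real_derivative_inner_right[OF der] orth by metis
    moreover have "(*) (0::real) = (\<lambda>h. 0)" by auto
    ultimately show ?thesis
      by (auto simp: has_field_derivative_def intro: has_derivative_at_withinI)
  qed
qed (use \<open>t \<ge> 0\<close> in auto)

lemma strict_mono_if_dwell_time:
  fixes tk :: "nat \<Rightarrow> real"
  assumes "alpha > 0" and "\<And>k. tk (Suc k) - tk k \<ge> alpha"
  shows "strict_mono tk"
proof (rule strict_monoI_Suc)
  show "tk k < tk (Suc k)" for k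
    using assms(1) assms(2)[of k] by linarith
qed

lemma finite_range_inter_atMost:
  fixes tk :: "nat \<Rightarrow> real"
  assumes "filterlim tk at_top sequentially"
  shows "finite (range tk \<inter> {..T})"
proof -
  obtain N where "\<And>k. k \<ge> N \<Longrightarrow> tk k > T"
    using assms unfolding filterlim_at_top_dense eventually_sequentially by blast
  then have "range tk \<inter> {..T} \<subseteq> tk ` {..<N}"
    by (force simp: not_le[symmetric])
  then show ?thesis using finite_surj by blast
qed

lemma recurrent_mode_interval:
  fixes tk :: "nat \<Rightarrow> real" and sigma :: "real \<Rightarrow> nat"
  assumes dwell: "\<And>k. tk (Suc k) - tk k \<ge> alpha"
    and mono: "strict_mono tk"
    and lim: "filterlim tk at_top sequentially"
    and const: "\<And>k t. tk k \<le> t \<Longrightarrow> t < tk (Suc k) \<Longrightarrow> sigma t = sigma (tk k)"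
    and inf: "infinite {k. sigma (tk k) = i}"
  obtains a where "a \<ge> T" and "\<And>s. s \<in> {a<..<a + alpha} \<Longrightarrow> s \<notin> range tk \<and> sigma s = i"
proof -
  obtain N where "\<And>k. k \<ge> N \<Longrightarrow> tk k \<ge> T"
    using lim unfolding filterlim_at_top eventually_sequentially by blast
  moreover obtain k where "k \<ge> N" "sigma (tk k) = i"
    using inf unfolding infinite_nat_iff_unbounded_le by blast
  moreover have "s \<notin> range tk" if "tk k < s" "s < tk (Suc k)" for s
  proof
    assume "s \<in> range tk"
    then obtain m where "s = tk m" by blast
    then have "k < m" "m < Suc k" using that strict_mono_less[OF mono] by auto
    then show False by simp
  qed
  ultimately show ?thesis
    using that[of "tk k"] dwell[of k] const[of k] by auto
qed

lemma switched_limit_in_kernel: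
  fixes L :: "nat \<Rightarrow> real^'m^'m" and sigma :: "real \<Rightarrow> nat" and tk :: "nat \<Rightarrow> real"
    and x :: "real \<Rightarrow> real^'m"
  assumes dwell: "\<And>k. tk (Suc k) - tk k \<ge> alpha" and alpha: "alpha > 0"
    and lim_tk: "filterlim tk at_top sequentially"
    and switch: "\<And>k t. tk k \<le> t \<Longrightarrow> t < tk (Suc k) \<Longrightarrow> sigma t = sigma (tk k)"
    and recurs: "infinite {k. sigma (tk k) = i}"
    and cont: "continuous_on {0..} x"
    and ode: "\<And>t. t > 0 \<Longrightarrow> t \<notin> range tk \<Longrightarrow>
                (x has_vector_derivative - (L (sigma t) *v x t)) (at t)"
    and lim: "(x \<longlongrightarrow> l) at_top"
  shows "L i *v l = 0"
proof (rule recurrent_flow_limit_in_kernel[OF matrix_vector_mul_bounded_linear lim alpha])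
  fix T
  obtain a where a_ge: "a \<ge> max T 0"
    and free: "\<And>s. s \<in> {a<..<a + alpha} \<Longrightarrow> s \<notin> range tk \<and> sigma s = i"
    using recurrent_mode_interval[OF dwell strict_mono_if_dwell_time[where tk = tk, OF alpha dwell]
        lim_tk switch recurs, where T = "max T 0"] by blast
  have "continuous_on {a..a + alpha} x"
    using a_ge by (intro continuous_on_subset[OF cont]) auto
  moreover have "(x has_vector_derivative - (L i *v x s)) (at s)" if "s \<in> {a<..<a + alpha}" for s
  proof -
    have "s > 0" "s \<notin> range tk" and mode: "sigma s = i"
      using a_ge that free[OF that] by auto
    show ?thesis using ode[OF \<open>s > 0\<close> \<open>s \<notin> range tk\<close>] unfolding mode .
  qed
  ultimately show "\<exists>a\<ge>T. continuous_on {a..a + alpha} x \<and>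
      (\<forall>s\<in>{a<..<a + alpha}. (x has_vector_derivative - (L i *v x s)) (at s))"
    using a_ge by auto
qed

lemma switched_limit_inner_eq_initial:
  fixes L :: "nat \<Rightarrow> real^'m^'m" and sigma :: "real \<Rightarrow> nat" and tk :: "nat \<Rightarrow> real"
    and x :: "real \<Rightarrow> real^'m"
  assumes cont: "continuous_on {0..} x"
    and ode: "\<And>t. t > 0 \<Longrightarrow> t \<notin> range tk \<Longrightarrow>
                (x has_vector_derivative - (L (sigma t) *v x t)) (at t)"
    and lim_tk: "filterlim tk at_top sequentially"
    and lim: "(x \<longlongrightarrow> l) at_top"
    and orth: "\<And>t y. t > 0 \<Longrightarrow> e \<bullet> (L (sigma t) *v y) = 0"
  shows "e \<bullet> l = e \<bullet> x 0"
proof (rule tendsto_unique[OF _ tendsto_inner[OF tendsto_const lim]])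
  have "e \<bullet> x t = e \<bullet> x 0" if "t \<ge> 0" for t
  proof (rule inner_conserved_if_orthogonal_derivative[OF cont finite_range_inter_atMost[OF lim_tk]
        ode _ that])
    fix s :: real assume "s > 0"
    then have "e \<bullet> (L (sigma s) *v x s) = 0" by (rule orth)
    then show "e \<bullet> - (L (sigma s) *v x s) = 0" by simp
  qed
  then have "\<forall>\<^sub>F t in at_top. e \<bullet> x t = e \<bullet> x 0"
    unfolding eventually_at_top_linorder by blast
  then show "((\<lambda>t. e \<bullet> x t) \<longlongrightarrow> e \<bullet> x 0) at_top"
    by (rule tendsto_eventually)
qed simp

theorem theorem5:
  fixes Gs :: "nat \<Rightarrow> ('n::finite \<Rightarrow> 'n \<Rightarrow> real^'d::finite^'d)"
    and M :: nat
    and sigma :: "real \<Rightarrow> nat"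
    and tk :: "nat \<Rightarrow> real"
    and alpha :: real
    and x :: "real \<Rightarrow> real^('n \<times> 'd)"
    and xstar :: "real^('n \<times> 'd)"
  assumes n_gt1: "CARD('n) > 1"
    and graphs: "\<forall>i<M. mw_graph (Gs i)"
    and M_pos: "M \<ge> 1"
    and sigma_range: "\<forall>t\<ge>0. sigma t < M"
    and t0: "tk 0 = 0"
    and alpha_pos: "alpha > 0"
    and dwell: "\<forall>k. tk (Suc k) - tk k \<ge> alpha"
    and tk_lim: "filterlim tk at_top sequentially"
    and piecewise_const: "\<forall>k. \<forall>t. tk k \<le> t \<and> t < tk (Suc k) \<longrightarrow> sigma t = sigma (tk k)"
    and inf_often: "\<forall>i<M. infinite {k. sigma (tk k) = i}"
    and x_cont: "continuous_on {0..} x"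
    and x_ode: "\<forall>t>0. t \<notin> range tk \<longrightarrow>
               (x has_vector_derivative (- (laplacian (Gs (sigma t)) *v x t))) (at t)"
    and x_lim: "(x \<longlongrightarrow> xstar) at_top"
  shows "xstar \<in> (\<Inter>i<M. null_space (laplacian (Gs i)))
     \<and> (\<forall>(r::nat) (eta :: nat \<Rightarrow> real^('n \<times> 'd)).
           (\<forall>i<r. \<forall>j<r. eta i \<bullet> eta j = (if i = j then 1 else 0)) \<and>
           span (eta ` {..<r}) = (\<Inter>i<M. null_space (laplacian (Gs i)))
           \<longrightarrow> xstar = (\<Sum>i<r. (eta i \<bullet> x 0) *\<^sub>R eta i))"
proof -
  let ?N = "\<Inter>i<M. null_space (laplacian (Gs i))"
  have switch: "\<And>k t. tk k \<le> t \<Longrightarrow> t < tk (Suc k) \<Longrightarrow> sigma t = sigma (tk k)"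
    using piecewise_const by blast
  have "laplacian (Gs i) *v xstar = 0" if "i < M" for i
    using switched_limit_in_kernel[where L = "\<lambda>i. laplacian (Gs i)", OF dwell[rule_format]
        alpha_pos tk_lim switch inf_often[rule_format, OF that] x_cont x_ode[rule_format] x_lim] .
  then have null: "xstar \<in> ?N" by (simp add: null_space_def)
  have conserved: "e \<bullet> xstar = e \<bullet> x 0" if "e \<in> ?N" for e
  proof (rule switched_limit_inner_eq_initial[where L = "\<lambda>i. laplacian (Gs i)",
        OF x_cont x_ode[rule_format] tk_lim x_lim])
    fix t :: real and y assume "t > 0"
    then have "sigma t < M" using sigma_range by simp
    then show "e \<bullet> (laplacian (Gs (sigma t)) *v y) = 0"
      using graphs \<open>e \<in> ?N\<close>
      by (intro inner_symmetric_matrix_null laplacian_symmetric) (auto simp: null_space_def)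
  qed
  have "xstar = (\<Sum>i<r. (eta i \<bullet> x 0) *\<^sub>R eta i)"
    if orth: "\<forall>i<r. \<forall>j<r. eta i \<bullet> eta j = (if i = j then 1 else 0)"
      and span_eq: "span (eta ` {..<r}) = ?N" for r and eta :: "nat \<Rightarrow> real^('n \<times> 'd)"
  proof (rule orthonormal_span_projection_unique[OF orth])
    show "xstar \<in> span (eta ` {..<r})" unfolding span_eq by (rule null)
    fix i assume "i < r"
    then have "eta i \<in> span (eta ` {..<r})" by (intro span_base imageI) simp
    then have "eta i \<in> ?N" unfolding span_eq .
    then show "eta i \<bullet> xstar = eta i \<bullet> x 0" by (rule conserved)
  qed
  with null show ?thesis by blast
qed

end
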